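(* Let $(L,\vee,\wedge,\odot,\rightarrow,0,1)$ be a residuated lattice. The following are equivalent: (i) $L$ is a BL-algebra; (ii) for all $x,y,z\in L$, if $x\odot(x\rightarrow y)\leq z$, then $(x\rightarrow z)\vee(y\rightarrow z)=1$; (iii) $[x\odot(x\rightarrow y)]\rightarrow z=(x\rightarrow z)\vee(y\rightarrow z)$ for all $x,y,z\in L$.
   Context: A (commutative) residuated lattice is an algebra $(L,\wedge,\vee,\odot,\rightarrow,0,1)$ such that $(L,\wedge,\vee,0,1)$ is a bounded lattice, $(L,\odot,1)$ is a commutative ordered monoid, and $z\leq x\rightarrow y$ iff $x\odot z\leq y$ for all $x,y,z\in L$. A BL-algebra is a residuated lattice satisfying prelinearity $(x\rightarrow y)\vee(y\rightarrow x)=1$ and divisibility $x\odot(x\rightarrow y)=x\wedge y$ for all $x,y$. *)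

theory Defs
  imports Main
begin

text \<open>A (commutative) residuated lattice on a bounded lattice type 'a,
  given by the monoid operation mult and the residuum imp
  (0 = bot, 1 = top, order = the lattice order).\<close>

definition residuated_lattice :: "('a::bounded_lattice \<Rightarrow> 'a \<Rightarrow> 'a) \<Rightarrow> ('a \<Rightarrow> 'a \<Rightarrow> 'a) \<Rightarrow> bool" where
  "residuated_lattice mult imp \<longleftrightarrow>
     (\<forall>x y z. mult (mult x y) z = mult x (mult y z)) \<and>
     (\<forall>x y. mult x y = mult y x) \<and>
     (\<forall>x. mult x top = x) \<and>
     (\<forall>x y z. x \<le> y \<longrightarrow> mult x z \<le> mult y z) \<and>
     (\<forall>x y z. z \<le> imp x y \<longleftrightarrow> mult x z \<le> y)"

definition BL_algebra :: "('a::bounded_lattice \<Rightarrow> 'a \<Rightarrow> 'a) \<Rightarrow> ('a \<Rightarrow> 'a \<Rightarrow> 'a) \<Rightarrow> bool" where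
  "BL_algebra mult imp \<longleftrightarrow>
     residuated_lattice mult imp \<and>
     (\<forall>x y. sup (imp x y) (imp y x) = top) \<and>
     (\<forall>x y. mult x (imp x y) = inf x y)"

end

theory Submission
  imports Defs
begin

text \<open>
  (i) \<Rightarrow> (iii): by divisibility the left-hand side is \<open>(x \<sqinter> y) \<rightarrow> z\<close>, and
  multiplying \<open>w = (x \<sqinter> y) \<rightarrow> z\<close> by the prelinearity identity
  \<open>1 = (x \<rightarrow> y) \<squnion> (y \<rightarrow> x)\<close> and distributing splits \<open>w\<close> into a part below
  \<open>x \<rightarrow> z\<close> and a part below \<open>y \<rightarrow> z\<close>.
  (iii) \<Rightarrow> (ii) holds since \<open>a \<rightarrow> b = 1\<close> iff \<open>a \<le> b\<close>.
  (ii) \<Rightarrow> (i): for \<open>z = x \<odot> (x \<rightarrow> y)\<close> the same splitting, now applied to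
  \<open>x \<sqinter> y\<close>, gives \<open>x \<sqinter> y \<le> z\<close>, i.e. divisibility; then \<open>z = x \<sqinter> y\<close>
  yields prelinearity because \<open>x \<rightarrow> (x \<sqinter> y) \<le> x \<rightarrow> y\<close>.
\<close>

context
  fixes mult imp :: "'a::bounded_lattice \<Rightarrow> 'a \<Rightarrow> 'a"
  assumes residuated: "residuated_lattice mult imp"
begin

lemma le_imp_iff: "z \<le> imp x y \<longleftrightarrow> mult x z \<le> y"
  using residuated unfolding residuated_lattice_def by blast

lemma mult_commute: "mult x y = mult y x"
  using residuated unfolding residuated_lattice_def by blast

lemma mult_assoc: "mult (mult x y) z = mult x (mult y z)"
  using residuated unfolding residuated_lattice_def by blast

lemma mult_top: "mult x top = x"
  using residuated unfolding residuated_lattice_def by blast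

lemma mult_mono_left: "x \<le> y \<Longrightarrow> mult x z \<le> mult y z"
  using residuated unfolding residuated_lattice_def by blast

lemma mult_mono_right: "x \<le> y \<Longrightarrow> mult z x \<le> mult z y"
  using mult_mono_left mult_commute by metis

lemma mult_imp_le: "mult x (imp x y) \<le> y"
  using le_imp_iff by blast

lemma mult_le_left: "mult x y \<le> x"
  by (metis mult_mono_right mult_top top.extremum)

lemma imp_eq_top_iff: "imp x y = top \<longleftrightarrow> x \<le> y"
  by (metis le_imp_iff mult_top top.extremum top.extremum_uniqueI)

lemma imp_antimono: "x \<le> y \<Longrightarrow> imp y z \<le> imp x z"
  by (meson le_imp_iff mult_imp_le mult_mono_left order_trans)

lemma imp_mono: "x \<le> y \<Longrightarrow> imp z x \<le> imp z y"
  by (meson le_imp_iff mult_imp_le order_trans)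

lemma mult_sup_distrib: "mult x (sup y z) = sup (mult x y) (mult x z)"
proof (rule order.antisym)
  have "y \<le> imp x (sup (mult x y) (mult x z))" "z \<le> imp x (sup (mult x y) (mult x z))"
    by (simp_all add: le_imp_iff)
  then show "mult x (sup y z) \<le> sup (mult x y) (mult x z)"
    by (simp add: le_imp_iff [symmetric])
  show "sup (mult x y) (mult x z) \<le> mult x (sup y z)"
    by (simp add: mult_mono_right)
qed

lemma split_by_sup_eq_top:
  assumes "sup u v = top"
  shows "w = sup (mult w u) (mult w v)"
  by (metis assms mult_sup_distrib mult_top)

lemma BL_imp_mult_imp_eq_sup:
  assumes prelinear: "\<And>x y. sup (imp x y) (imp y x) = top"
    and divisible: "\<And>x y. mult x (imp x y) = inf x y"
  shows "imp (mult x (imp x y)) z = sup (imp x z) (imp y z)"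
proof (rule order.antisym)
  define w where "w = imp (inf x y) z"
  have "mult (imp x y) w \<le> imp x z"
    unfolding le_imp_iff w_def by (metis divisible mult_assoc mult_imp_le)
  moreover have "mult (imp y x) w \<le> imp y z"
    unfolding le_imp_iff w_def by (metis divisible inf_commute mult_assoc mult_imp_le)
  moreover have "w = sup (mult (imp x y) w) (mult (imp y x) w)"
    using split_by_sup_eq_top [OF prelinear [of x y], of w] by (simp add: mult_commute)
  ultimately have "w \<le> sup (imp x z) (imp y z)"
    by (metis sup_mono)
  then show "imp (mult x (imp x y)) z \<le> sup (imp x z) (imp y z)"
    by (simp add: w_def divisible)
  show "sup (imp x z) (imp y z) \<le> imp (mult x (imp x y)) z"
    by (simp add: divisible imp_antimono)
qed

lemma sup_imp_eq_top_if_mult_imp_le: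
  assumes "\<And>x y z. imp (mult x (imp x y)) z = sup (imp x z) (imp y z)"
    and "mult x (imp x y) \<le> z"
  shows "sup (imp x z) (imp y z) = top"
  by (metis assms imp_eq_top_iff)

lemma BL_algebra_if_sup_imp_eq_top:
  assumes sup_top: "\<And>x y z. mult x (imp x y) \<le> z \<Longrightarrow> sup (imp x z) (imp y z) = top"
  shows "BL_algebra mult imp"
proof -
  have divisible: "mult x (imp x y) = inf x y" for x y
  proof (rule order.antisym)
    show "mult x (imp x y) \<le> inf x y"
      by (simp add: mult_imp_le mult_le_left)
    define z where "z = mult x (imp x y)"
    have "mult (inf x y) (imp x z) \<le> z" "mult (inf x y) (imp y z) \<le> z"
      by (meson inf_le1 inf_le2 mult_imp_le mult_mono_left order_trans)+
    moreover have "inf x y = sup (mult (inf x y) (imp x z)) (mult (inf x y) (imp y z))"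
      using split_by_sup_eq_top [OF sup_top [of x y z]] by (simp add: z_def)
    ultimately show "inf x y \<le> z"
      by (metis sup_least)
  qed
  have prelinear: "sup (imp x y) (imp y x) = top" for x y
  proof -
    have "sup (imp x (inf x y)) (imp y (inf x y)) = top"
      using sup_top divisible by simp
    moreover have "imp x (inf x y) \<le> imp x y" "imp y (inf x y) \<le> imp y x"
      by (simp_all add: imp_mono)
    ultimately show ?thesis
      by (metis sup_mono top.extremum_uniqueI)
  qed
  show ?thesis
    unfolding BL_algebra_def using residuated divisible prelinear by blast
qed

end

theorem proposition3p4:
  fixes mult imp :: "'a::bounded_lattice \<Rightarrow> 'a \<Rightarrow> 'a"
  assumes "residuated_lattice mult imp"
  shows "(BL_algebra mult imp
            \<longleftrightarrow> (\<forall>x y z. mult x (imp x y) \<le> z \<longrightarrow> sup (imp x z) (imp y z) = top))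
       \<and> (BL_algebra mult imp
            \<longleftrightarrow> (\<forall>x y z. imp (mult x (imp x y)) z = sup (imp x z) (imp y z)))"
proof -
  have i_iii: "BL_algebra mult imp \<Longrightarrow>
      \<forall>x y z. imp (mult x (imp x y)) z = sup (imp x z) (imp y z)"
    using BL_imp_mult_imp_eq_sup [OF assms] unfolding BL_algebra_def by blast
  have iii_ii: "\<forall>x y z. imp (mult x (imp x y)) z = sup (imp x z) (imp y z) \<Longrightarrow>
      \<forall>x y z. mult x (imp x y) \<le> z \<longrightarrow> sup (imp x z) (imp y z) = top"
    using sup_imp_eq_top_if_mult_imp_le [OF assms] by blast
  have ii_i: "\<forall>x y z. mult x (imp x y) \<le> z \<longrightarrow> sup (imp x z) (imp y z) = top \<Longrightarrow>
      BL_algebra mult imp"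
    using BL_algebra_if_sup_imp_eq_top [OF assms] by blast
  show ?thesis
    using i_iii iii_ii ii_i by blast
qed

end
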